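(* Let $p\in(0,1)$ and let $X,\gamma$ satisfy the standing assumptions in the context. The problem of minimizing $\mathrm{ES}_p(g(X))$ over $g\in\mathcal G_{\rm cm}$ admits a solution if and only if $\mathrm{ess\text{-}sup}\,\gamma\le\frac1{1-p}$; and if $\mathrm{ess\text{-}sup}\,\gamma\le\frac1{1-p}$, the constant function $g_X(\cdot)=x_0$ is a solution.
   Context: $(\Omega,\mathcal F,\mathbb P)$ is atomless. $\mathrm{VaR}_p(Y)=\inf\{x:\mathbb P(Y\le x)\ge p\}$, $\mathrm{ES}_p(Y)=\frac1{1-p}\int_p^1\mathrm{VaR}_u(Y)\,\mathrm du$. Standing assumptions: $X\ge0$ is a random variable whose distribution has a positive density on its support; $\gamma:\mathbb R\to\mathbb R$ is continuous and strictly positive; $\gamma$ also denotes $\gamma(X)$; $\mathbb E[\gamma]=1$, $\mathbb E[\gamma X]<\infty$. With $\mathcal G_1$ the measurable functions $\mathbb R\to\mathbb R$ and $x_0\in\mathbb R$, $\mathcal G_{\rm cm}=\{g\in\mathcal G_1:\mathbb E[\gamma g(X)]\ge x_0\}$. *)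

theory Defs
  imports "HOL-Probability.Probability"
begin

definition atomless :: "'a measure \<Rightarrow> bool" where
  "atomless M \<longleftrightarrow> (\<forall>A\<in>sets M. measure M A > 0 \<longrightarrow>
     (\<exists>B\<in>sets M. B \<subseteq> A \<and> 0 < measure M B \<and> measure M B < measure M A))"

definition VaR :: "'a measure \<Rightarrow> real \<Rightarrow> ('a \<Rightarrow> real) \<Rightarrow> real" where
  "VaR M p Y = Inf {x. measure M {\<omega>\<in>space M. Y \<omega> \<le> x} \<ge> p}"

text \<open>Expected Shortfall ES_p(Y) = 1/(1-p) \<integral>_p^1 VaR_u(Y) du, with values in
  (-\<infinity>,+\<infinity>]: since u \<mapsto> VaR_u(Y) is bounded below on [p,1), a non-integrable
  integrand means the integral is +\<infinity>.\<close>
definition ES :: "'a measure \<Rightarrow> real \<Rightarrow> ('a \<Rightarrow> real) \<Rightarrow> ereal" where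
  "ES M p Y = (if set_integrable lborel {p<..<1} (\<lambda>u. VaR M u Y)
               then ereal ((1 / (1 - p)) * (LINT u:{p<..<1}|lborel. VaR M u Y))
               else \<infinity>)"

definition ext_expect :: "'a measure \<Rightarrow> ('a \<Rightarrow> real) \<Rightarrow> ereal" where
  "ext_expect M f = enn2ereal (\<integral>\<^sup>+ \<omega>. ennreal (f \<omega>) \<partial>M)
                  - enn2ereal (\<integral>\<^sup>+ \<omega>. ennreal (- f \<omega>) \<partial>M)"

definition expect_defined :: "'a measure \<Rightarrow> ('a \<Rightarrow> real) \<Rightarrow> bool" where
  "expect_defined M f \<longleftrightarrow>
     f \<in> borel_measurable M \<and>
     \<not> ((\<integral>\<^sup>+ \<omega>. ennreal (f \<omega>) \<partial>M) = \<infinity> \<and> (\<integral>\<^sup>+ \<omega>. ennreal (- f \<omega>) \<partial>M) = \<infinity>)"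

definition G_cm :: "'a measure \<Rightarrow> ('a \<Rightarrow> real) \<Rightarrow> (real \<Rightarrow> real) \<Rightarrow> real \<Rightarrow> (real \<Rightarrow> real) set" where
  "G_cm M X \<gamma> x0 = {g. g \<in> borel_measurable borel \<and>
      expect_defined M (\<lambda>\<omega>. \<gamma> (X \<omega>) * g (X \<omega>)) \<and>
      ext_expect M (\<lambda>\<omega>. \<gamma> (X \<omega>) * g (X \<omega>)) \<ge> ereal x0}"

definition dist_support :: "'a measure \<Rightarrow> ('a \<Rightarrow> real) \<Rightarrow> real set" where
  "dist_support M X = {x. \<forall>e>0. measure M {\<omega>\<in>space M. X \<omega> \<in> ball x e} > 0}"

definition is_ES_minimizer ::
  "'a measure \<Rightarrow> real \<Rightarrow> ('a \<Rightarrow> real) \<Rightarrow> (real \<Rightarrow> real) \<Rightarrow> real \<Rightarrow> (real \<Rightarrow> real) \<Rightarrow> bool" where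
  "is_ES_minimizer M p X \<gamma> x0 g \<longleftrightarrow> g \<in> G_cm M X \<gamma> x0 \<and>
     (\<forall>h\<in>G_cm M X \<gamma> x0. ES M p (\<lambda>\<omega>. g (X \<omega>)) \<le> ES M p (\<lambda>\<omega>. h (X \<omega>)))"

end

theory Submission
  imports Defs
begin

text \<open>With \<open>q = VaR\<^sub>p(Y)\<close> one has \<open>ES\<^sub>p(Y) = q + E[(Y - q)\<^sup>+] / (1 - p)\<close>. If
  \<open>\<gamma>(X) \<le> 1/(1-p)\<close> almost surely, then \<open>\<gamma>(X) Y \<le> \<gamma>(X) q + (Y - q)\<^sup>+ / (1 - p)\<close>
  pointwise, so every admissible \<open>g\<close> has \<open>x\<^sub>0 \<le> E[\<gamma>(X) g(X)] \<le> ES\<^sub>p(g(X))\<close>, and the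
  constant \<open>x\<^sub>0\<close> attains this bound. Otherwise \<open>\<gamma>(X) > c > 1/(1-p)\<close> with positive
  probability, and since \<open>X\<close> has no atoms this event contains an event \<open>{X \<in> S}\<close> of
  probability \<open>a < 1 - p\<close> with \<open>b = E[\<gamma>(X) 1\<^sub>S(X)] > a/(1-p)\<close>. The admissible
  \<open>h = (x\<^sub>0 + K)/b 1\<^sub>S - K\<close> has \<open>ES\<^sub>p(h(X)) = x\<^sub>0 \<theta> - K (1 - \<theta>)\<close> with
  \<open>\<theta> = a/((1-p) b) < 1\<close>, which tends to \<open>-\<infinity>\<close> as \<open>K \<rightarrow> \<infinity>\<close>; as \<open>ES\<close> never
  takes the value \<open>-\<infinity>\<close>, no minimiser exists.\<close>

section \<open>Value-at-Risk and Expected Shortfall\<close>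

context prob_space
begin

lemma cdf_distr_eq_prob:
  assumes "Y \<in> borel_measurable M"
  shows "cdf (distr M borel Y) x = prob {\<omega>\<in>space M. Y \<omega> \<le> x}"
  unfolding cdf_def using assms by (subst measure_distr) (auto intro!: arg_cong2[where f=measure])

lemma VaR_eq_cdf_pseudoinverse:
  assumes "Y \<in> borel_measurable M"
  shows "VaR M u Y = Inf {x. u \<le> cdf (distr M borel Y) x}"
  using assms by (simp add: VaR_def cdf_distr_eq_prob)

lemma VaR_le_iff:
  assumes "Y \<in> borel_measurable M" "u \<in> {0<..<1}"
  shows "VaR M u Y \<le> x \<longleftrightarrow> u \<le> prob {\<omega>\<in>space M. Y \<omega> \<le> x}"
proof -
  interpret Y: cdf_distribution "distr M borel Y"
    using assms by (simp add: cdf_distribution_def)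
  show ?thesis
    using Y.pseudoinverse[of u x] assms by (simp add: VaR_eq_cdf_pseudoinverse cdf_distr_eq_prob)
qed

lemma VaR_mono:
  assumes "Y \<in> borel_measurable M" "0 < u" "u \<le> v" "v < 1"
  shows "VaR M u Y \<le> VaR M v Y"
  using VaR_le_iff[OF assms(1), of u "VaR M v Y"] VaR_le_iff[OF assms(1), of v "VaR M v Y"] assms
  by auto

lemma VaR_bounds:
  assumes Y: "Y \<in> borel_measurable M" and u: "u \<in> {0<..<1}"
    and bounds: "\<And>\<omega>. \<omega> \<in> space M \<Longrightarrow> Y \<omega> \<in> {a..b}"
  shows "VaR M u Y \<in> {a..b}"
  unfolding atLeastAtMost_iff
proof
  show "a \<le> VaR M u Y"
  proof (rule ccontr)
    assume "\<not> a \<le> VaR M u Y"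
    then have "{\<omega>\<in>space M. Y \<omega> \<le> VaR M u Y} = {}"
      using bounds by force
    then have "prob {\<omega>\<in>space M. Y \<omega> \<le> VaR M u Y} = 0"
      by (simp only: measure_empty)
    then show False
      using VaR_le_iff[OF Y u, of "VaR M u Y"] u by simp
  qed
  have "{\<omega>\<in>space M. Y \<omega> \<le> b} = space M"
    using bounds by auto
  then show "VaR M u Y \<le> b"
    using VaR_le_iff[OF Y u] u by (simp add: prob_space)
qed

lemma
  assumes "Y \<in> borel_measurable M"
  shows distr_VaR_eq_distr:
      "distr (restrict_space lborel {0<..<1}) borel (\<lambda>u. VaR M u Y) = distr M borel Y"
    and measurable_VaR:
      "(\<lambda>u. VaR M u Y) \<in> borel_measurable (restrict_space lborel {0<..<1})"
proof -
  interpret Y: cdf_distribution "distr M borel Y"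
    using assms by (simp add: cdf_distribution_def)
  have VaR_eq: "(\<lambda>u. VaR M u Y) = Y.I"
    using VaR_eq_cdf_pseudoinverse[OF assms] by auto
  show "distr (restrict_space lborel {0<..<1}) borel (\<lambda>u. VaR M u Y) = distr M borel Y"
    unfolding VaR_eq by (rule Y.distr_I_eq_M)
  show "(\<lambda>u. VaR M u Y) \<in> borel_measurable (restrict_space lborel {0<..<1})"
    unfolding VaR_eq using Y.measurable_CI
    by (subst measurable_cong_sets[OF sets_restrict_space_cong[OF sets_lborel] refl])
qed

lemma nn_integral_eq_nn_integral_VaR:
  assumes "Y \<in> borel_measurable M" "f \<in> borel_measurable borel"
  shows "(\<integral>\<^sup>+\<omega>. f (Y \<omega>) \<partial>M) = (\<integral>\<^sup>+u. f (VaR M u Y) * indicator {0<..<1} u \<partial>lborel)"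
proof -
  have "(\<integral>\<^sup>+\<omega>. f (Y \<omega>) \<partial>M) = (\<integral>\<^sup>+x. f x \<partial>distr M borel Y)"
    using assms by (simp add: nn_integral_distr)
  also have "\<dots> = (\<integral>\<^sup>+u. f (VaR M u Y) \<partial>restrict_space lborel {0<..<1})"
    using assms measurable_VaR[OF assms(1)]
    by (simp add: distr_VaR_eq_distr[symmetric] nn_integral_distr)
  also have "\<dots> = (\<integral>\<^sup>+u. f (VaR M u Y) * indicator {0<..<1} u \<partial>lborel)"
    by (subst nn_integral_restrict_space) auto
  finally show ?thesis .
qed

lemma set_borel_measurable_VaR:
  assumes "Y \<in> borel_measurable M" "0 \<le> p"
  shows "set_borel_measurable lborel {p<..<1} (\<lambda>u. VaR M u Y)"
proof -
  have "(\<lambda>u. VaR M u Y) \<in> borel_measurable (restrict_space lborel {p<..<1})"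
    by (rule measurable_restrict_mono[OF measurable_VaR[OF assms(1)]]) (use assms in auto)
  then show ?thesis
    unfolding set_borel_measurable_def by (subst (asm) borel_measurable_restrict_space_iff) auto
qed

lemma set_integrable_VaR_bounded:
  assumes Y: "Y \<in> borel_measurable M" and p: "0 \<le> p"
    and bounds: "\<And>\<omega>. \<omega> \<in> space M \<Longrightarrow> Y \<omega> \<in> {a..b}"
  shows "set_integrable lborel {p<..<1} (\<lambda>u. VaR M u Y)"
  unfolding set_integrable_def
proof (rule integrableI_bounded_set[where A="{p<..<1}" and B="\<bar>a\<bar> + \<bar>b\<bar>"])
  show "(\<lambda>u. indicator {p<..<1} u *\<^sub>R VaR M u Y) \<in> borel_measurable lborel"
    using set_borel_measurable_VaR[OF Y p] by (simp add: set_borel_measurable_def)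
  show "AE u in lborel. u \<in> {p<..<1} \<longrightarrow> norm (indicator {p<..<1} u *\<^sub>R VaR M u Y) \<le> \<bar>a\<bar> + \<bar>b\<bar>"
  proof (intro AE_I2 impI)
    fix u :: real
    assume "u \<in> {p<..<1}"
    then have "VaR M u Y \<in> {a..b}"
      using VaR_bounds[OF Y _ bounds] p by simp
    then show "norm (indicator {p<..<1} u *\<^sub>R VaR M u Y) \<le> \<bar>a\<bar> + \<bar>b\<bar>"
      using \<open>u \<in> {p<..<1}\<close> by auto
  qed
  show "emeasure lborel {p<..<1} < \<infinity>"
    by (cases "p \<le> 1") auto
qed auto

text \<open>By the quantile transform the excess over \<open>q = VaR\<^sub>p(Y)\<close> is the integral of
  \<open>(VaR\<^sub>u(Y) - q)\<^sup>+\<close> over \<open>u \<in> (0,1)\<close>, and this integrand vanishes for \<open>u \<le> p\<close>.\<close>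
lemma nn_integral_VaR_excess:
  assumes Y: "Y \<in> borel_measurable M" and p: "p \<in> {0<..<1}"
    and shifted: "set_integrable lborel {p<..<1} (\<lambda>u. VaR M u Y - VaR M p Y)"
  shows "(\<integral>\<^sup>+\<omega>. ennreal (max 0 (Y \<omega> - VaR M p Y)) \<partial>M)
    = ennreal (LINT u:{p<..<1}|lborel. VaR M u Y - VaR M p Y)"
proof -
  define q where "q = VaR M p Y"
  have "(\<integral>\<^sup>+\<omega>. ennreal (max 0 (Y \<omega> - q)) \<partial>M)
      = (\<integral>\<^sup>+u. ennreal (VaR M u Y - q) * indicator {0<..<1} u \<partial>lborel)"
    using nn_integral_eq_nn_integral_VaR[OF Y, of "\<lambda>x. ennreal (x - q)"] Y
    by (simp add: ennreal_max_0)
  also have "\<dots> = (\<integral>\<^sup>+u. ennreal (indicator {p<..<1} u * (VaR M u Y - q)) \<partial>lborel)"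
  proof (rule nn_integral_cong)
    fix u :: real
    have "VaR M u Y \<le> q" if "0 < u" "u \<le> p"
      using VaR_mono[OF Y] that p by (simp add: q_def)
    then show "ennreal (VaR M u Y - q) * indicator {0<..<1} u
        = ennreal (indicator {p<..<1} u * (VaR M u Y - q))"
      using p by (auto simp: indicator_def ennreal_neg)
  qed
  also have "\<dots> = ennreal (LINT u:{p<..<1}|lborel. VaR M u Y - q)"
    unfolding set_lebesgue_integral_def real_scaleR_def
  proof (rule nn_integral_eq_integral)
    show "integrable lborel (\<lambda>u. indicator {p<..<1} u * (VaR M u Y - q))"
      using shifted by (simp add: set_integrable_def q_def)
    show "AE u in lborel. 0 \<le> indicator {p<..<1} u * (VaR M u Y - q)"
      using VaR_mono[OF Y] p by (auto simp: q_def indicator_def)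
  qed
  finally show ?thesis
    by (simp add: q_def)
qed

lemma
  assumes Y: "Y \<in> borel_measurable M" and p: "p \<in> {0<..<1}"
    and int: "set_integrable lborel {p<..<1} (\<lambda>u. VaR M u Y)"
  shows integrable_VaR_excess: "integrable M (\<lambda>\<omega>. max 0 (Y \<omega> - VaR M p Y))"
    and ES_eq_VaR_plus_excess:
      "ES M p Y = ereal (VaR M p Y + (\<integral>\<omega>. max 0 (Y \<omega> - VaR M p Y) \<partial>M) / (1 - p))"
proof -
  define q where "q = VaR M p Y"
  define J where "J = (LINT u:{p<..<1}|lborel. VaR M u Y)"
  have const: "set_integrable lborel {p<..<1} (\<lambda>u. q)"
    using p by (simp add: set_integrable_def integrable_mult_indicator)
  have shifted: "set_integrable lborel {p<..<1} (\<lambda>u. VaR M u Y - q)"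
    and shifted_eq: "(LINT u:{p<..<1}|lborel. VaR M u Y - q) = J - (1 - p) * q"
    using int const p by (auto simp: J_def set_integral_const)
  have "0 \<le> J - (1 - p) * q"
    unfolding shifted_eq[symmetric] set_lebesgue_integral_def
    using VaR_mono[OF Y] p by (intro integral_nonneg_AE) (auto simp: q_def indicator_def)
  moreover have "(\<integral>\<^sup>+\<omega>. ennreal (max 0 (Y \<omega> - q)) \<partial>M) = ennreal (J - (1 - p) * q)"
    using nn_integral_VaR_excess[OF Y p] shifted shifted_eq by (simp add: q_def)
  ultimately have "integrable M (\<lambda>\<omega>. max 0 (Y \<omega> - q)) \<and> (\<integral>\<omega>. max 0 (Y \<omega> - q) \<partial>M) = J - (1 - p) * q"
    using Y by (subst nn_integral_eq_integrable[symmetric]) auto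
  then show "integrable M (\<lambda>\<omega>. max 0 (Y \<omega> - VaR M p Y))"
    and "ES M p Y = ereal (VaR M p Y + (\<integral>\<omega>. max 0 (Y \<omega> - VaR M p Y) \<partial>M) / (1 - p))"
    using int p by (auto simp: ES_def q_def J_def field_simps)
qed

lemma ES_two_point:
  assumes A: "A \<in> events" and p: "p \<in> {0<..<1}" and small: "prob A < 1 - p" and D: "0 \<le> D"
  shows "ES M p (\<lambda>\<omega>. D * indicator A \<omega> - K) = ereal (D * prob A / (1 - p) - K)"
proof -
  define Y where "Y = (\<lambda>\<omega>. D * indicator A \<omega> - K)"
  have Y: "Y \<in> borel_measurable M"
    using A by (simp add: Y_def)
  have bounds: "Y \<omega> \<in> {-K..D - K}" for \<omega>
    using D by (simp add: Y_def indicator_def)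
  have int: "set_integrable lborel {p<..<1} (\<lambda>u. VaR M u Y)"
    using set_integrable_VaR_bounded[OF Y _ bounds] p by simp
  have "1 - prob A = prob (space M - A)"
    using A by (simp add: prob_compl)
  also have "\<dots> \<le> prob {\<omega>\<in>space M. Y \<omega> \<le> -K}"
  proof (rule finite_measure_mono)
    show "{\<omega>\<in>space M. Y \<omega> \<le> -K} \<in> events"
      using Y by measurable
  qed (auto simp: Y_def)
  finally have "VaR M p Y \<le> -K"
    using VaR_le_iff[OF Y p] small by simp
  then have VaR_p: "VaR M p Y = -K"
    using VaR_bounds[OF Y p bounds] by simp
  have "(\<integral>\<omega>. max 0 (Y \<omega> - VaR M p Y) \<partial>M) = (\<integral>\<omega>. D * indicator A \<omega> \<partial>M)"
    unfolding VaR_p using D by (intro Bochner_Integration.integral_cong) (auto simp: Y_def)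
  also have "\<dots> = D * prob A"
    using A by simp
  finally have "ES M p Y = ereal (D * prob A / (1 - p) - K)"
    using ES_eq_VaR_plus_excess[OF Y p int] by (simp add: VaR_p)
  then show ?thesis
    by (simp add: Y_def)
qed

lemma ES_const: "p \<in> {0<..<1} \<Longrightarrow> ES M p (\<lambda>_. c) = ereal c"
  using ES_two_point[of "{}" p 0 "- c"] by simp

end

lemma ES_cong:
  assumes "\<And>\<omega>. \<omega> \<in> space M \<Longrightarrow> Y \<omega> = Y' \<omega>"
  shows "ES M p Y = ES M p Y'"
proof -
  have "VaR M u Y = VaR M u Y'" for u
    unfolding VaR_def using assms by (metis (mono_tags, lifting) Collect_cong)
  then show ?thesis
    by (simp add: ES_def)
qed

section \<open>Extended expectations and admissible strategies\<close>

lemma ext_expect_eq_integral: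
  assumes "integrable M f"
  shows "ext_expect M f = ereal (integral\<^sup>L M f)"
  using assms by (rule integrableE) (simp add: ext_expect_def)

lemma expect_defined_if_integrable:
  assumes "integrable M f"
  shows "expect_defined M f"
  using integrableD[OF assms] by (simp add: expect_defined_def)

lemma ext_expect_le_integral:
  assumes g: "integrable M g" and f: "f \<in> borel_measurable M" and le: "AE x in M. f x \<le> g x"
  shows "ext_expect M f \<le> ereal (integral\<^sup>L M g)"
proof -
  have "(\<integral>\<^sup>+x. ennreal (f x) \<partial>M) \<le> (\<integral>\<^sup>+x. ennreal (g x) \<partial>M)"
    using le by (intro nn_integral_mono_AE) (auto elim!: eventually_mono intro: ennreal_leI)
  then have pos: "(\<integral>\<^sup>+x. ennreal (f x) \<partial>M) \<noteq> \<infinity>"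
    using integrableD(2)[OF g] by (auto simp: top_unique)
  show ?thesis
  proof (cases "(\<integral>\<^sup>+x. ennreal (- f x) \<partial>M) = \<infinity>")
    case True
    then show ?thesis
      using pos by (cases "\<integral>\<^sup>+x. ennreal (f x) \<partial>M") (simp_all add: ext_expect_def)
  next
    case False
    then have "integrable M f"
      using f pos by (simp add: real_integrable_def)
    then show ?thesis
      using integral_mono_AE[OF _ g le] by (simp add: ext_expect_eq_integral)
  qed
qed

lemma integrable_mult_indicator_comp:
  fixes f :: "'a \<Rightarrow> real"
  assumes "integrable M f" "X \<in> measurable M N" "S \<in> sets N"
  shows "integrable M (\<lambda>\<omega>. f \<omega> * indicator S (X \<omega>))"
  using assms by (intro Bochner_Integration.integrable_bound[OF assms(1)]) (auto simp: indicator_def)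

lemma G_cm_memberI:
  assumes "g \<in> borel_measurable borel" and "integrable M (\<lambda>\<omega>. \<gamma> (X \<omega>) * g (X \<omega>))"
    and "x0 \<le> (\<integral>\<omega>. \<gamma> (X \<omega>) * g (X \<omega>) \<partial>M)"
  shows "g \<in> G_cm M X \<gamma> x0"
  using assms by (simp add: G_cm_def expect_defined_if_integrable ext_expect_eq_integral)

lemma not_is_ES_minimizer_if_unbounded_below:
  assumes "\<And>e. \<exists>h\<in>G_cm M X \<gamma> x0. ES M p (\<lambda>\<omega>. h (X \<omega>)) < ereal e"
  shows "\<not> is_ES_minimizer M p X \<gamma> x0 g"
proof
  assume "is_ES_minimizer M p X \<gamma> x0 g"
  then have "ES M p (\<lambda>\<omega>. g (X \<omega>)) \<le> ereal e" for e
    using assms[of e] by (force simp: is_ES_minimizer_def)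
  then have "ES M p (\<lambda>\<omega>. g (X \<omega>)) = -\<infinity>"
    by (rule ereal_bot)
  then show False
    by (simp add: ES_def split: if_splits)
qed

section \<open>Optimality of the constant strategy\<close>

context prob_space
begin

lemma ext_expect_weighted_le_ES:
  assumes Y: "Y \<in> borel_measurable M" and \<phi>: "\<phi> \<in> borel_measurable M" and p: "p \<in> {0<..<1}"
    and \<phi>_bounds: "AE \<omega> in M. 0 \<le> \<phi> \<omega> \<and> \<phi> \<omega> \<le> 1 / (1 - p)"
    and \<phi>_int: "integrable M \<phi>" and \<phi>_expect: "expectation \<phi> = 1"
  shows "ext_expect M (\<lambda>\<omega>. \<phi> \<omega> * Y \<omega>) \<le> ES M p Y"
proof (cases "set_integrable lborel {p<..<1} (\<lambda>u. VaR M u Y)")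
  case False
  then show ?thesis
    by (simp add: ES_def)
next
  case True
  define q where "q = VaR M p Y"
  define Z where "Z = (\<lambda>\<omega>. max 0 (Y \<omega> - q))"
  have Z: "integrable M Z"
    using integrable_VaR_excess[OF Y p True] by (simp add: Z_def q_def)
  have "AE \<omega> in M. \<phi> \<omega> * Y \<omega> \<le> \<phi> \<omega> * q + Z \<omega> / (1 - p)"
    using \<phi>_bounds
  proof eventually_elim
    case (elim \<omega>)
    have "\<phi> \<omega> * (Y \<omega> - q) \<le> \<phi> \<omega> * Z \<omega>"
      using elim by (intro mult_left_mono) (auto simp: Z_def)
    also have "\<dots> \<le> Z \<omega> / (1 - p)"
      using elim mult_right_mono[of "\<phi> \<omega>" "1 / (1 - p)" "Z \<omega>"] by (simp add: Z_def)
    finally show ?case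
      by (simp add: algebra_simps)
  qed
  then have "ext_expect M (\<lambda>\<omega>. \<phi> \<omega> * Y \<omega>) \<le> ereal (\<integral>\<omega>. \<phi> \<omega> * q + Z \<omega> / (1 - p) \<partial>M)"
    using \<phi>_int Z Y \<phi> by (intro ext_expect_le_integral) auto
  also have "(\<integral>\<omega>. \<phi> \<omega> * q + Z \<omega> / (1 - p) \<partial>M) = q + expectation Z / (1 - p)"
    using \<phi>_int Z \<phi>_expect by simp
  also have "\<dots> = ES M p Y"
    using ES_eq_VaR_plus_excess[OF Y p True] by (simp add: Z_def q_def)
  finally show ?thesis .
qed

lemma x0_le_ES_on_G_cm:
  fixes X :: "'a \<Rightarrow> real" and \<gamma> :: "real \<Rightarrow> real"
  assumes X: "random_variable borel X" and \<gamma>: "\<gamma> \<in> borel_measurable borel"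
    and \<gamma>_nonneg: "\<And>x. 0 \<le> \<gamma> x"
    and \<gamma>_int: "integrable M (\<lambda>\<omega>. \<gamma> (X \<omega>))" and \<gamma>_expect: "expectation (\<lambda>\<omega>. \<gamma> (X \<omega>)) = 1"
    and p: "p \<in> {0<..<1}"
    and small: "esssup M (\<lambda>\<omega>. ereal (\<gamma> (X \<omega>))) \<le> ereal (1 / (1 - p))"
    and g: "g \<in> G_cm M X \<gamma> x0"
  shows "ereal x0 \<le> ES M p (\<lambda>\<omega>. g (X \<omega>))"
proof -
  have g_meas: "g \<in> borel_measurable borel"
    using g by (simp add: G_cm_def)
  have "ereal x0 \<le> ext_expect M (\<lambda>\<omega>. \<gamma> (X \<omega>) * g (X \<omega>))"
    using g by (simp add: G_cm_def)
  also have "\<dots> \<le> ES M p (\<lambda>\<omega>. g (X \<omega>))"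
  proof (rule ext_expect_weighted_le_ES)
    show "AE \<omega> in M. 0 \<le> \<gamma> (X \<omega>) \<and> \<gamma> (X \<omega>) \<le> 1 / (1 - p)"
      using esssup_AE[of "\<lambda>\<omega>. ereal (\<gamma> (X \<omega>))" M] small \<gamma>_nonneg
      by (auto elim!: eventually_mono dest: order_trans)
  qed (use X \<gamma> g_meas \<gamma>_int \<gamma>_expect p in auto)
  finally show ?thesis .
qed

lemma is_ES_minimizer_const:
  fixes X :: "'a \<Rightarrow> real" and \<gamma> :: "real \<Rightarrow> real"
  assumes X: "random_variable borel X" and \<gamma>: "\<gamma> \<in> borel_measurable borel"
    and \<gamma>_nonneg: "\<And>x. 0 \<le> \<gamma> x"
    and \<gamma>_int: "integrable M (\<lambda>\<omega>. \<gamma> (X \<omega>))" and \<gamma>_expect: "expectation (\<lambda>\<omega>. \<gamma> (X \<omega>)) = 1"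
    and p: "p \<in> {0<..<1}"
    and small: "esssup M (\<lambda>\<omega>. ereal (\<gamma> (X \<omega>))) \<le> ereal (1 / (1 - p))"
  shows "is_ES_minimizer M p X \<gamma> x0 (\<lambda>_. x0)"
  unfolding is_ES_minimizer_def
proof
  show "(\<lambda>_. x0) \<in> G_cm M X \<gamma> x0"
    using \<gamma>_int \<gamma>_expect by (intro G_cm_memberI) auto
  show "\<forall>h\<in>G_cm M X \<gamma> x0. ES M p (\<lambda>\<omega>. x0) \<le> ES M p (\<lambda>\<omega>. h (X \<omega>))"
    using x0_le_ES_on_G_cm[OF X \<gamma> \<gamma>_nonneg \<gamma>_int \<gamma>_expect p small] ES_const[OF p] by simp
qed

section \<open>Unboundedness below\<close>

lemma distributed_prob_singleton_eq_0:
  fixes X :: "'a \<Rightarrow> real"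
  assumes "distributed M lborel X f"
  shows "prob {\<omega>\<in>space M. X \<omega> = t} = 0"
proof -
  have "emeasure M {\<omega>\<in>space M. X \<omega> = t} = (\<integral>\<^sup>+x. f x * indicator {t} x \<partial>lborel)"
    using distributed_emeasure[OF assms, of "{t}"] by (simp add: vimage_def Int_def conj_commute)
  also have "\<dots> = (\<integral>\<^sup>+x. 0 \<partial>(lborel :: real measure))"
  proof (rule nn_integral_cong_AE)
    show "AE x in lborel. f x * indicator {t} x = 0"
      using AE_lborel_singleton[of t] by (auto elim!: eventually_mono)
  qed
  finally show ?thesis
    by (simp add: measure_def)
qed

lemma
  fixes X :: "'a \<Rightarrow> real"
  assumes X[measurable]: "random_variable borel X" and S[measurable]: "S \<in> sets borel"
  shows finite_borel_measure_restricted_law: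
      "finite_borel_measure (distr (restrict_space M {\<omega>\<in>space M. X \<omega> \<in> S}) borel X)"
    and measure_restricted_law: "B \<in> sets borel \<Longrightarrow>
      measure (distr (restrict_space M {\<omega>\<in>space M. X \<omega> \<in> S}) borel X) B
        = prob {\<omega>\<in>space M. X \<omega> \<in> S \<and> X \<omega> \<in> B}"
proof -
  define \<Omega> where "\<Omega> = {\<omega>\<in>space M. X \<omega> \<in> S}"
  have \<Omega>: "\<Omega> \<in> events"
    unfolding \<Omega>_def by measurable
  show "finite_borel_measure (distr (restrict_space M {\<omega>\<in>space M. X \<omega> \<in> S}) borel X)"
    unfolding finite_borel_measure_def finite_borel_measure_axioms_def \<Omega>_def[symmetric] using \<Omega>
    by (auto intro!: finite_measure.finite_measure_distr finite_measure_restrict_space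
        measurable_restrict_space1 simp: finite_measure_axioms)
  assume B: "B \<in> sets borel"
  have "measure (distr (restrict_space M \<Omega>) borel X) B = measure (restrict_space M \<Omega>) (X -` B \<inter> \<Omega>)"
    using B \<Omega> by (subst measure_distr)
      (auto intro: measurable_restrict_space1 simp: space_restrict_space sets.Int_space_eq2)
  also have "\<dots> = prob {\<omega>\<in>space M. X \<omega> \<in> S \<and> X \<omega> \<in> B}"
    using \<Omega> by (subst measure_restrict_space) (auto simp: \<Omega>_def intro!: arg_cong[where f=prob])
  finally show "measure (distr (restrict_space M {\<omega>\<in>space M. X \<omega> \<in> S}) borel X) B
      = prob {\<omega>\<in>space M. X \<omega> \<in> S \<and> X \<omega> \<in> B}"
    by (simp add: \<Omega>_def)
qed

text \<open>\<open>t \<mapsto> P(X \<in> S, X \<le> t)\<close> is the cdf of the law of \<open>X\<close> restricted to \<open>{X \<in> S}\<close>,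
  continuous because \<open>X\<close> has no atoms.\<close>
lemma exists_prob_sublevel_eq:
  fixes X :: "'a \<Rightarrow> real"
  assumes X: "random_variable borel X"
    and no_atoms: "\<And>t. prob {\<omega>\<in>space M. X \<omega> = t} = 0"
    and S: "S \<in> sets borel"
    and \<tau>: "0 < \<tau>" "\<tau> < prob {\<omega>\<in>space M. X \<omega> \<in> S}"
  shows "\<exists>t. prob {\<omega>\<in>space M. X \<omega> \<in> S \<and> X \<omega> \<le> t} = \<tau>"
proof -
  define N where "N = distr (restrict_space M {\<omega>\<in>space M. X \<omega> \<in> S}) borel X"
  interpret N: finite_borel_measure N
    unfolding N_def using X S by (rule finite_borel_measure_restricted_law)
  note measure_N = measure_restricted_law[OF X S, folded N_def]
  have cdf_N: "cdf N t = prob {\<omega>\<in>space M. X \<omega> \<in> S \<and> X \<omega> \<le> t}" for t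
    using measure_N[of "{..t}"] by (simp add: cdf_def2)
  have "measure N {t} \<le> prob {\<omega>\<in>space M. X \<omega> = t}" for t
    using measure_N[of "{t}"] X by (auto intro!: finite_measure_mono)
  then have continuous: "isCont (cdf N) t" for t
    using no_atoms N.isCont_cdf by (metis antisym measure_nonneg)
  have "(cdf N \<longlongrightarrow> prob {\<omega>\<in>space M. X \<omega> \<in> S}) at_top"
    using N.cdf_lim_at_top measure_N[of UNIV] by (simp add: N.borel_UNIV)
  then have "\<forall>\<^sub>F t in at_top. \<tau> < cdf N t"
    using \<tau>(2) by (rule order_tendstoD(1))
  then obtain t2 where t2: "\<tau> < cdf N t2"
    by (auto simp: eventually_at_top_linorder)
  have "\<forall>\<^sub>F t in at_bot. cdf N t < \<tau>"
    using N.cdf_lim_at_bot \<tau>(1) by (rule order_tendstoD(2))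
  then obtain t1 where t1: "cdf N t1 < \<tau>"
    by (auto simp: eventually_at_bot_linorder)
  have "t1 \<le> t2"
    using N.cdf_nondecreasing[of t2 t1] t1 t2 by linarith
  then obtain t where "cdf N t = \<tau>"
    using IVT'[of "cdf N" t1 \<tau> t2] t1 t2 continuous by (auto intro: continuous_at_imp_continuous_on)
  then show ?thesis
    using cdf_N by auto
qed

lemma prob_less_esssup_pos:
  assumes f: "f \<in> borel_measurable M" and c: "ereal c < esssup M (\<lambda>\<omega>. ereal (f \<omega>))"
  shows "0 < prob {\<omega>\<in>space M. c < f \<omega>}"
proof -
  have "\<not> (AE \<omega> in M. f \<omega> \<le> c)"
  proof
    assume "AE \<omega> in M. f \<omega> \<le> c"
    then have "esssup M (\<lambda>\<omega>. ereal (f \<omega>)) \<le> ereal c"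
      using f by (intro esssup_I) auto
    then show False
      using c by simp
  qed
  then show ?thesis
    using f prob_Collect_eq_0[of "\<lambda>\<omega>. c < f \<omega>"] by (auto simp: not_less zero_less_measure_iff)
qed

lemma integral_indicator_comp:
  assumes X: "random_variable N X" and S: "S \<in> sets N"
  shows "(\<integral>\<omega>. indicator S (X \<omega>) \<partial>M) = prob {\<omega>\<in>space M. X \<omega> \<in> S}"
proof -
  have "{\<omega>\<in>space M. X \<omega> \<in> S} \<in> events"
    using X S by measurable
  moreover have "(\<integral>\<omega>. indicator S (X \<omega>) \<partial>M) = (\<integral>\<omega>. indicator {\<omega>\<in>space M. X \<omega> \<in> S} \<omega> \<partial>M :: real)"
    by (intro Bochner_Integration.integral_cong) (auto simp: indicator_def)
  ultimately show ?thesis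
    by simp
qed

lemma exists_heavy_event:
  fixes X :: "'a \<Rightarrow> real" and \<phi> :: "real \<Rightarrow> real"
  assumes X[measurable]: "random_variable borel X"
    and no_atoms: "\<And>t. prob {\<omega>\<in>space M. X \<omega> = t} = 0"
    and \<phi>[measurable]: "\<phi> \<in> borel_measurable borel" and \<phi>_int: "integrable M (\<lambda>\<omega>. \<phi> (X \<omega>))"
    and p: "p \<in> {0<..<1}"
    and big: "ereal (1 / (1 - p)) < esssup M (\<lambda>\<omega>. ereal (\<phi> (X \<omega>)))"
  obtains S where "S \<in> sets borel" and "prob {\<omega>\<in>space M. X \<omega> \<in> S} < 1 - p"
    and "prob {\<omega>\<in>space M. X \<omega> \<in> S} < (1 - p) * (\<integral>\<omega>. \<phi> (X \<omega>) * indicator S (X \<omega>) \<partial>M)"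
proof -
  obtain c where c: "1 / (1 - p) < c" "ereal c < esssup M (\<lambda>\<omega>. ereal (\<phi> (X \<omega>)))"
    using ereal_dense2[OF big] by auto
  have heavy: "0 < prob {\<omega>\<in>space M. c < \<phi> (X \<omega>)}"
    using c(2) by (intro prob_less_esssup_pos) auto
  define \<tau> where "\<tau> = min (prob {\<omega>\<in>space M. c < \<phi> (X \<omega>)}) (1 - p) / 2"
  have \<tau>: "0 < \<tau>" "\<tau> < prob {\<omega>\<in>space M. X \<omega> \<in> {x. c < \<phi> x}}" "\<tau> < 1 - p"
    using heavy p by (auto simp: \<tau>_def)
  have "{x. c < \<phi> x} \<in> sets borel"
    by measurable
  then obtain t where t: "prob {\<omega>\<in>space M. X \<omega> \<in> {x. c < \<phi> x} \<and> X \<omega> \<le> t} = \<tau>"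
    using exists_prob_sublevel_eq[OF X no_atoms _ \<tau>(1,2)] by blast
  define S where "S = {x. c < \<phi> x \<and> x \<le> t}"
  have S: "S \<in> sets borel"
    unfolding S_def by measurable
  have prob_S: "prob {\<omega>\<in>space M. X \<omega> \<in> S} = \<tau>"
    using t by (simp add: S_def)
  have "c * \<tau> = (\<integral>\<omega>. c * indicator S (X \<omega>) \<partial>M)"
    using integral_indicator_comp[OF X S] prob_S by simp
  also have "\<dots> \<le> (\<integral>\<omega>. \<phi> (X \<omega>) * indicator S (X \<omega>) \<partial>M)"
    using S \<phi>_int
    by (intro integral_mono integrable_mult_indicator_comp[OF _ X]) (auto simp: indicator_def S_def)
  finally have "(1 - p) * (c * \<tau>) \<le> (1 - p) * (\<integral>\<omega>. \<phi> (X \<omega>) * indicator S (X \<omega>) \<partial>M)"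
    using p by (intro mult_left_mono) auto
  moreover have "\<tau> < (1 - p) * (c * \<tau>)"
  proof -
    have "1 < (1 - p) * c"
      using c(1) p by (simp add: field_simps)
    then show ?thesis
      using mult_strict_left_mono[of 1 "(1 - p) * c" \<tau>] \<tau>(1) by (simp add: ac_simps)
  qed
  ultimately show ?thesis
    using that S prob_S \<tau>(3) by auto
qed

lemma shifted_indicator_in_G_cm:
  fixes X :: "'a \<Rightarrow> real" and \<gamma> :: "real \<Rightarrow> real"
  assumes X: "random_variable borel X"
    and \<gamma>_int: "integrable M (\<lambda>\<omega>. \<gamma> (X \<omega>))" and \<gamma>_expect: "expectation (\<lambda>\<omega>. \<gamma> (X \<omega>)) = 1"
    and S: "S \<in> sets borel"
    and b: "(\<integral>\<omega>. \<gamma> (X \<omega>) * indicator S (X \<omega>) \<partial>M) = b" "b \<noteq> 0"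
  shows "(\<lambda>x. (x0 + K) / b * indicator S x - K) \<in> G_cm M X \<gamma> x0"
proof (rule G_cm_memberI)
  have int_S: "integrable M (\<lambda>\<omega>. \<gamma> (X \<omega>) * indicator S (X \<omega>))"
    using integrable_mult_indicator_comp[OF \<gamma>_int X S] .
  have eq: "(\<lambda>\<omega>. \<gamma> (X \<omega>) * ((x0 + K) / b * indicator S (X \<omega>) - K))
      = (\<lambda>\<omega>. (x0 + K) / b * (\<gamma> (X \<omega>) * indicator S (X \<omega>)) - K * \<gamma> (X \<omega>))"
    by (simp add: fun_eq_iff algebra_simps)
  show "(\<lambda>x. (x0 + K) / b * indicator S x - K) \<in> borel_measurable borel"
    using S by simp
  show "integrable M (\<lambda>\<omega>. \<gamma> (X \<omega>) * ((x0 + K) / b * indicator S (X \<omega>) - K))"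
    unfolding eq using int_S \<gamma>_int by simp
  show "x0 \<le> (\<integral>\<omega>. \<gamma> (X \<omega>) * ((x0 + K) / b * indicator S (X \<omega>) - K) \<partial>M)"
    unfolding eq using int_S \<gamma>_int \<gamma>_expect b by simp
qed

lemma ES_indicator_comp:
  fixes X :: "'a \<Rightarrow> real"
  assumes X[measurable]: "random_variable borel X" and S[measurable]: "S \<in> sets borel"
    and p: "p \<in> {0<..<1}" and small: "prob {\<omega>\<in>space M. X \<omega> \<in> S} < 1 - p" and D: "0 \<le> D"
  shows "ES M p (\<lambda>\<omega>. D * indicator S (X \<omega>) - K)
    = ereal (D * prob {\<omega>\<in>space M. X \<omega> \<in> S} / (1 - p) - K)"
proof -
  have "ES M p (\<lambda>\<omega>. D * indicator S (X \<omega>) - K)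
      = ES M p (\<lambda>\<omega>. D * indicator {\<omega>\<in>space M. X \<omega> \<in> S} \<omega> - K)"
    by (rule ES_cong) (simp add: indicator_def)
  also have "\<dots> = ereal (D * prob {\<omega>\<in>space M. X \<omega> \<in> S} / (1 - p) - K)"
    by (intro ES_two_point p small D) measurable
  finally show ?thesis .
qed

lemma ES_unbounded_below_on_G_cm:
  fixes X :: "'a \<Rightarrow> real" and \<gamma> :: "real \<Rightarrow> real"
  assumes X: "random_variable borel X" and no_atoms: "\<And>t. prob {\<omega>\<in>space M. X \<omega> = t} = 0"
    and \<gamma>: "\<gamma> \<in> borel_measurable borel"
    and \<gamma>_int: "integrable M (\<lambda>\<omega>. \<gamma> (X \<omega>))" and \<gamma>_expect: "expectation (\<lambda>\<omega>. \<gamma> (X \<omega>)) = 1"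
    and p: "p \<in> {0<..<1}"
    and big: "ereal (1 / (1 - p)) < esssup M (\<lambda>\<omega>. ereal (\<gamma> (X \<omega>)))"
  shows "\<exists>h\<in>G_cm M X \<gamma> x0. ES M p (\<lambda>\<omega>. h (X \<omega>)) < ereal e"
proof -
  obtain S where S: "S \<in> sets borel" and small: "prob {\<omega>\<in>space M. X \<omega> \<in> S} < 1 - p"
    and heavy: "prob {\<omega>\<in>space M. X \<omega> \<in> S} < (1 - p) * (\<integral>\<omega>. \<gamma> (X \<omega>) * indicator S (X \<omega>) \<partial>M)"
    using exists_heavy_event[OF X no_atoms \<gamma> \<gamma>_int p big] .
  define a where "a = prob {\<omega>\<in>space M. X \<omega> \<in> S}"
  define b where "b = (\<integral>\<omega>. \<gamma> (X \<omega>) * indicator S (X \<omega>) \<partial>M)"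
  have "0 < (1 - p) * b"
    using heavy measure_nonneg[of M "{\<omega>\<in>space M. X \<omega> \<in> S}"] unfolding b_def by linarith
  then have b: "0 < b"
    using p by (simp add: zero_less_mult_iff)
  define \<theta> where "\<theta> = a / ((1 - p) * b)"
  have \<theta>: "0 \<le> \<theta>" "\<theta> < 1"
    using heavy b p by (auto simp: \<theta>_def a_def b_def)
  define K where "K = (\<bar>x0\<bar> + \<bar>e\<bar> + 1) / (1 - \<theta>)"
  have K: "K * (1 - \<theta>) = \<bar>x0\<bar> + \<bar>e\<bar> + 1" "\<bar>x0\<bar> \<le> K"
    using \<theta> by (auto simp: K_def field_simps intro: order_trans[OF _ mult_left_le])
  define h where "h = (\<lambda>x. (x0 + K) / b * indicator S x - K)"
  have "h \<in> G_cm M X \<gamma> x0"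
    unfolding h_def using b by (intro shifted_indicator_in_G_cm[OF X \<gamma>_int \<gamma>_expect S]) (auto simp: b_def)
  moreover have "ES M p (\<lambda>\<omega>. h (X \<omega>)) = ereal ((x0 + K) / b * a / (1 - p) - K)"
    unfolding h_def a_def using K(2) b by (intro ES_indicator_comp X S p small) simp
  moreover have "(x0 + K) / b * a / (1 - p) = (x0 + K) * \<theta>"
    by (simp add: \<theta>_def ac_simps)
  moreover have "x0 * \<theta> \<le> \<bar>x0\<bar>"
    using \<theta> abs_ge_self[of x0] mult_left_le[of \<theta> "\<bar>x0\<bar>"] mult_right_mono[of x0 "\<bar>x0\<bar>" \<theta>] by linarith
  ultimately show ?thesis
    using K(1) by (intro bexI[of _ h]) (auto simp: algebra_simps)
qed

end

theorem proposition6: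
  fixes M :: "'a measure" and X :: "'a \<Rightarrow> real" and \<gamma> :: "real \<Rightarrow> real"
    and p x0 :: real
  assumes "prob_space M" and "atomless M"
    and "p \<in> {0<..<1}"
    and "X \<in> borel_measurable M" and "\<forall>\<omega>\<in>space M. X \<omega> \<ge> 0"
    and "\<exists>f. distributed M lborel X (\<lambda>x. ennreal (f x)) \<and>
              (\<forall>x\<in>dist_support M X. f x > 0)"
    and "continuous_on UNIV \<gamma>" and "\<forall>x. \<gamma> x > 0"
    and "integrable M (\<lambda>\<omega>. \<gamma> (X \<omega>))" and "(\<integral>\<omega>. \<gamma> (X \<omega>) \<partial>M) = 1"
    and "integrable M (\<lambda>\<omega>. \<gamma> (X \<omega>) * X \<omega>)"
  shows "((\<exists>g. is_ES_minimizer M p X \<gamma> x0 g) \<longleftrightarrow>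
            esssup M (\<lambda>\<omega>. ereal (\<gamma> (X \<omega>))) \<le> ereal (1 / (1 - p)))
       \<and> (esssup M (\<lambda>\<omega>. ereal (\<gamma> (X \<omega>))) \<le> ereal (1 / (1 - p)) \<longrightarrow>
            is_ES_minimizer M p X \<gamma> x0 (\<lambda>_. x0))"
proof -
  interpret prob_space M by fact
  have p: "p \<in> {0<..<1}" by fact
  have \<gamma>: "\<gamma> \<in> borel_measurable borel"
    using assms(7) by (rule borel_measurable_continuous_onI)
  have \<gamma>_nonneg: "\<And>x. 0 \<le> \<gamma> x"
    using assms(8) by (simp add: less_imp_le)
  obtain f where "distributed M lborel X (\<lambda>x. ennreal (f x))"
    using assms(6) by blast
  then have no_atoms: "\<And>t. prob {\<omega>\<in>space M. X \<omega> = t} = 0"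
    by (rule distributed_prob_singleton_eq_0)
  have "\<not> is_ES_minimizer M p X \<gamma> x0 g"
    if "\<not> esssup M (\<lambda>\<omega>. ereal (\<gamma> (X \<omega>))) \<le> ereal (1 / (1 - p))" for g
    using that ES_unbounded_below_on_G_cm[OF assms(4) no_atoms \<gamma> assms(9,10) p]
    by (intro not_is_ES_minimizer_if_unbounded_below) (auto simp: not_le)
  then show ?thesis
    using is_ES_minimizer_const[OF assms(4) \<gamma> \<gamma>_nonneg assms(9,10) p] by blast
qed

end
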